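(* For every signature $\Sigma$, the data $\mathcal F_\Sigma$ described below form a category with families. Moreover, if the variable system has the de Bruijn property, then $\mathcal F_\Sigma$ is a contextual category with families.
   Context: Fix an infinite set $V$ of variables with decidable equality, and a fresh variable provider: functions $\varphi,\mathsf{fr}$ assigning to each finite $X\subseteq V$ an inhabited subset $\varphi(X)\subseteq V\setminus X$ and an element $\mathsf{fr}(X)\in\varphi(X)$. The variable system has the de Bruijn property if $\varphi(X)=\{\mathsf{fr}(X)\}$ for all finite $X$. Fix disjoint sets $F$ (function symbols) and $T$ (type symbols) with decidable equality. Preelements are terms built from variables and symbols of $F$; a pretype is $S(t_1,\ldots,t_n)$ with $S\in T$ and $t_i$ preelements. $\mathrm{V}(E)$ is the set of variables of an expression $E$, $\equiv$ is syntactic identity, and $E[\bar a/\bar x]$ is simultaneous substitution. A precontext is a sequence $\Gamma=x_1:A_1,\ldots,x_n:A_n$ of pretypes with $x_k\in\varphi(\{x_1,\ldots,x_{k-1}\})$ and $\mathrm{V}(A_k)\subseteq\{x_1,\ldots,x_{k-1}\}$; $\mathrm{OV}(\Gamma)=x_1,\ldots,x_n$, $\mathrm{V}(\Gamma)=\{x_1,\ldots,x_n\}$, $\mathrm{Fresh}(\Gamma)=\varphi(\mathrm{V}(\Gamma))$, $\mathrm{fresh}(\Gamma)=\mathsf{fr}(\mathrm{V}(\Gamma))$, $E[\bar a/\Gamma]=E[\bar a/x_1,\ldots,x_n]$. Top variables: $\mathrm{TV}(\langle\rangle)=\emptyset$, $\mathrm{TV}(\Gamma,x:A)=(\mathrm{TV}(\Gamma)\setminus\mathrm{V}(A))\cup\{x\}$.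 A determining sequence for $\Gamma$ is a strictly increasing $\bar i=i_1,\ldots,i_k$ in $\{1,\ldots,n\}$ with $\mathrm{TV}(\Gamma)\subseteq\{x_{i_1},\ldots,x_{i_k}\}$; for $\bar a=a_1,\ldots,a_n$ put $\bar a_{\bar i}=a_{i_1},\ldots,a_{i_k}$. A type predeclaration is $(\Gamma,S,\bar i)$ with $S\in T$, $\bar i$ determining; a function predeclaration is $(\Gamma,f,\bar i,U)$ with $f\in F$, $\bar i$ determining, $U$ a pretype with $\mathrm{V}(U)\subseteq\mathrm{V}(\Gamma)$. A presignature is a set $\Sigma$ of predeclarations with no symbol declared twice. Judgements are "$\Gamma$ context", "$A$ type $(\Gamma)$", "$a:A\ (\Gamma)$". $\mathcal{J}(\Sigma)$ is the smallest set of judgements closed under: (R1) $\langle\rangle$ context; (R2) from $\Gamma$ context and $A$ type $(\Gamma)$ infer $\Gamma,x:A$ context, for $x\in\mathrm{Fresh}(\Gamma)$; (R3) from $x_1:A_1,\ldots,x_n:A_n$ context infer $x_i:A_i\ (x_1:A_1,\ldots,x_n:A_n)$; (R4) if $(\Gamma,S,\bar i)\in\Sigma$ and $\bar a:\Delta\to\Gamma$, infer $S(\bar a_{\bar i})$ type $(\Delta)$; (R5) if $(\Gamma,f,\bar i,U)\in\Sigma$, $\bar a:\Delta\to\Gamma$ and $U[\bar a/\Gamma]$ type $(\Delta)$, infer $f(\bar a_{\bar i}):U[\bar a/\Gamma]\ (\Delta)$. Here, for $\Gamma=x_1:A_1,\ldots,x_n:A_n$, the context map "$\bar a:\Delta\to\Gamma$"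 abbreviates the $n+2$ judgements $\Delta$ context, $\Gamma$ context, and $a_k:A_k[a_1,\ldots,a_{k-1}/x_1,\ldots,x_{k-1}]\ (\Delta)$ for $k=1,\ldots,n$. $\Sigma$ is a signature if ($\Gamma$ context)$\in\mathcal{J}(\Sigma)$ whenever $(\Gamma,S,\bar i)\in\Sigma$, and ($U$ type $(\Gamma)$)$\in\mathcal{J}(\Sigma)$ whenever $(\Gamma,f,\bar i,U)\in\Sigma$. A category with families (cwf) consists of: a category $\mathcal C$ with a terminal object $\top$; for each object $\Gamma$ a class $\mathrm{Ty}(\Gamma)$, and for $f:\Delta\to\Gamma$ a function $A\mapsto A\{f\}:\mathrm{Ty}(\Gamma)\to\mathrm{Ty}(\Delta)$ with $A\{1\}=A$, $A\{f\circ g\}=A\{f\}\{g\}$; for $A\in\mathrm{Ty}(\Gamma)$ an object $\Gamma.A$ and a morphism $\mathrm{p}(A)=\mathrm{p}_\Gamma(A):\Gamma.A\to\Gamma$; for $A\in\mathrm{Ty}(\Gamma)$ a class $\mathrm{Tm}(\Gamma,A)$ and for $f:\Delta\to\Gamma$ a function $a\mapsto a\{f\}:\mathrm{Tm}(\Gamma,A)\to\mathrm{Tm}(\Delta,A\{f\})$ with $a\{1\}=a$, $a\{f\circ g\}=a\{f\}\{g\}$; for each $A\in\mathrm{Ty}(\Gamma)$ an element $\mathrm{v}_A\in\mathrm{Tm}(\Gamma.A,A\{\mathrm{p}(A)\})$; for $f:\Delta\to\Gamma$ and $a\in\mathrm{Tm}(\Delta,A\{f\})$ a morphism $\langle f,a\rangle_A:\Delta\to\Gamma.A$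 such that $\mathrm{p}(A)\circ\langle f,a\rangle_A=f$, $\mathrm{v}_A\{\langle f,a\rangle_A\}=a$, $\langle\mathrm{p}(A)\circ h,\mathrm{v}_A\{h\}\rangle_A=h$ for every $h:\Delta\to\Gamma.A$, and $\langle f,a\rangle_A\circ g=\langle f\circ g,a\{g\}\rangle_A$. A cwf is contextual if every object $\Gamma$ equals $\top.A_1.\cdots.A_n$ for a unique sequence $A_1\in\mathrm{Ty}(\top)$, $A_2\in\mathrm{Ty}(\top.A_1)$, $\ldots$, $A_n\in\mathrm{Ty}(\top.A_1.\cdots.A_{n-1})$, $n\ge 0$. The data $\mathcal F_\Sigma$: objects are precontexts $\Gamma$ with ($\Gamma$ context)$\in\mathcal{J}(\Sigma)$; morphisms $\Delta\to\Gamma$ are triples $(\Delta,\Gamma,\bar a)$ with $\bar a:\Delta\to\Gamma$ a context map in $\mathcal{J}(\Sigma)$; composition $(\Gamma,\Theta,\bar t)\circ(\Delta,\Gamma,\bar s)=(\Delta,\Theta,(t_1[\bar s/\Gamma],\ldots,t_k[\bar s/\Gamma]))$; identity $(\Gamma,\Gamma,\mathrm{OV}(\Gamma))$; terminal object the empty context $\langle\rangle$. $\mathrm{Ty}(\Gamma)=\{(\Gamma,A): (A\text{ type }(\Gamma))\in\mathcal{J}(\Sigma)\}$ with $(\Gamma,A)\{(\Delta,\Gamma,\bar a)\}=(\Delta,A[\bar a/\Gamma])$; $\mathrm{Tm}(\Gamma,(\Gamma,A))=\{((\Gamma,A),a): (a:A\ (\Gamma))\in\mathcal{J}(\Sigma)\}$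 with $((\Gamma,A),a)\{(\Delta,\Gamma,\bar a)\}=((\Delta,A[\bar a/\Gamma]),a[\bar a/\Gamma])$. For $\mathrm S=(\Gamma,S)\in\mathrm{Ty}(\Gamma)$: $\Gamma.\mathrm S=\langle\Gamma,\mathrm{fresh}(\Gamma):S\rangle$, $\mathrm{p}_\Gamma(\mathrm S)=(\Gamma.\mathrm S,\Gamma,\mathrm{OV}(\Gamma))$, $\mathrm{v}_{\mathrm S}=((\Gamma.\mathrm S,S),\mathrm{fresh}(\Gamma))$, and $\langle(\Delta,\Gamma,\bar s),((\Delta,S[\bar s/\Gamma]),b)\rangle_{\mathrm S}=(\Delta,\Gamma.\mathrm S,(\bar s,b))$. *)

theory Defs
  imports Main
begin

section \<open>Syntax: preelements and pretypes\<close>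

text \<open>Variables have type 'v, function symbols type 'f, type symbols type 't.
  Using separate HOL types makes F and T disjoint and gives decidable equality.\<close>

datatype ('v, 'f) pelem = Var 'v | App 'f "('v, 'f) pelem list"

datatype ('v, 'f, 't) ptype = PTy 't "('v, 'f) pelem list"

fun varsE :: "('v, 'f) pelem \<Rightarrow> 'v set" where
  "varsE (Var x) = {x}"
| "varsE (App f ts) = (\<Union>t \<in> set ts. varsE t)"

fun varsT :: "('v, 'f, 't) ptype \<Rightarrow> 'v set" where
  "varsT (PTy S ts) = (\<Union>t \<in> set ts. varsE t)"

fun substE :: "('v \<Rightarrow> ('v, 'f) pelem) \<Rightarrow> ('v, 'f) pelem \<Rightarrow> ('v, 'f) pelem" where
  "substE \<sigma> (Var x) = \<sigma> x"
| "substE \<sigma> (App f ts) = App f (map (substE \<sigma>) ts)"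

fun substT :: "('v \<Rightarrow> ('v, 'f) pelem) \<Rightarrow> ('v, 'f, 't) ptype \<Rightarrow> ('v, 'f, 't) ptype" where
  "substT \<sigma> (PTy S ts) = PTy S (map (substE \<sigma>) ts)"

definition substL :: "'v list \<Rightarrow> ('v, 'f) pelem list \<Rightarrow> 'v \<Rightarrow> ('v, 'f) pelem" where
  "substL xs as x = (case map_of (zip xs as) x of None \<Rightarrow> Var x | Some a \<Rightarrow> a)"

type_synonym ('v, 'f, 't) pctx = "('v \<times> ('v, 'f, 't) ptype) list"

definition OV :: "('v, 'f, 't) pctx \<Rightarrow> 'v list" where
  "OV \<Gamma> = map fst \<Gamma>"

definition VC :: "('v, 'f, 't) pctx \<Rightarrow> 'v set" where
  "VC \<Gamma> = set (OV \<Gamma>)"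

definition precontext :: "('v set \<Rightarrow> 'v set) \<Rightarrow> ('v, 'f, 't) pctx \<Rightarrow> bool" where
  "precontext \<phi> \<Gamma> \<longleftrightarrow>
     (\<forall>k < length \<Gamma>. fst (\<Gamma> ! k) \<in> \<phi> (VC (take k \<Gamma>))
                     \<and> varsT (snd (\<Gamma> ! k)) \<subseteq> VC (take k \<Gamma>))"

fun TV_rev :: "('v, 'f, 't) pctx \<Rightarrow> 'v set" where
  "TV_rev [] = {}"
| "TV_rev ((x, A) # \<Gamma>r) = (TV_rev \<Gamma>r - varsT A) \<union> {x}"

definition TV :: "('v, 'f, 't) pctx \<Rightarrow> 'v set" where
  "TV \<Gamma> = TV_rev (rev \<Gamma>)"

text \<open>Determining sequences (indices are 0-based here: position i refers to the (i+1)-th entry).\<close>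

definition determining :: "('v, 'f, 't) pctx \<Rightarrow> nat list \<Rightarrow> bool" where
  "determining \<Gamma> is \<longleftrightarrow> sorted_wrt (<) is \<and> (\<forall>i \<in> set is. i < length \<Gamma>)
     \<and> TV \<Gamma> \<subseteq> {fst (\<Gamma> ! i) | i. i \<in> set is}"

definition select :: "'a list \<Rightarrow> nat list \<Rightarrow> 'a list" where
  "select as is = map (\<lambda>i. as ! i) is"

datatype ('v, 'f, 't) predecl =
    TDecl "('v, 'f, 't) pctx" 't "nat list"
  | FDecl "('v, 'f, 't) pctx" 'f "nat list" "('v, 'f, 't) ptype"

fun predecl_ok :: "('v set \<Rightarrow> 'v set) \<Rightarrow> ('v, 'f, 't) predecl \<Rightarrow> bool" where
  "predecl_ok \<phi> (TDecl \<Gamma> S is) \<longleftrightarrow> precontext \<phi> \<Gamma> \<and> determining \<Gamma> is"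
| "predecl_ok \<phi> (FDecl \<Gamma> f is U) \<longleftrightarrow> precontext \<phi> \<Gamma> \<and> determining \<Gamma> is \<and> varsT U \<subseteq> VC \<Gamma>"

definition presignature :: "('v set \<Rightarrow> 'v set) \<Rightarrow> ('v, 'f, 't) predecl set \<Rightarrow> bool" where
  "presignature \<phi> \<Sigma> \<longleftrightarrow> (\<forall>d \<in> \<Sigma>. predecl_ok \<phi> d)
     \<and> (\<forall>\<Gamma> S is \<Gamma>' is'. TDecl \<Gamma> S is \<in> \<Sigma> \<longrightarrow> TDecl \<Gamma>' S is' \<in> \<Sigma> \<longrightarrow> \<Gamma> = \<Gamma>' \<and> is = is')
     \<and> (\<forall>\<Gamma> f is U \<Gamma>' is' U'. FDecl \<Gamma> f is U \<in> \<Sigma> \<longrightarrow> FDecl \<Gamma>' f is' U' \<in> \<Sigma>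
           \<longrightarrow> \<Gamma> = \<Gamma>' \<and> is = is' \<and> U = U')"

section \<open>Judgements and the derivable judgements J(Sigma)\<close>

datatype ('v, 'f, 't) judg =
    JCtx "('v, 'f, 't) pctx"
  | JTy "('v, 'f, 't) pctx" "('v, 'f, 't) ptype"
  | JTm "('v, 'f, 't) pctx" "('v, 'f) pelem" "('v, 'f, 't) ptype"

text \<open>The judgements making up the context map  as : Delta -> Gamma  (relative to a set J of judgements);
  in the rules R4, R5 below this condition is written out inline.\<close>

definition cmapJ :: "('v, 'f, 't) judg set \<Rightarrow> ('v, 'f, 't) pctx \<Rightarrow> ('v, 'f, 't) pctx
                     \<Rightarrow> ('v, 'f) pelem list \<Rightarrow> bool" where
  "cmapJ J \<Delta> \<Gamma> as \<longleftrightarrow> JCtx \<Delta> \<in> J \<and> JCtx \<Gamma> \<in> J \<and> length as = length \<Gamma>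
     \<and> (\<forall>k < length \<Gamma>. JTm \<Delta> (as ! k)
            (substT (substL (take k (OV \<Gamma>)) (take k as)) (snd (\<Gamma> ! k))) \<in> J)"

inductive_set Jdg :: "('v set \<Rightarrow> 'v set) \<Rightarrow> ('v, 'f, 't) predecl set \<Rightarrow> ('v, 'f, 't) judg set"
  for \<phi> :: "'v set \<Rightarrow> 'v set" and \<Sigma> :: "('v, 'f, 't) predecl set" where
  R1: "JCtx [] \<in> Jdg \<phi> \<Sigma>"
| R2: "\<lbrakk> JCtx \<Gamma> \<in> Jdg \<phi> \<Sigma>; JTy \<Gamma> A \<in> Jdg \<phi> \<Sigma>; x \<in> \<phi> (VC \<Gamma>) \<rbrakk>
        \<Longrightarrow> JCtx (\<Gamma> @ [(x, A)]) \<in> Jdg \<phi> \<Sigma>"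
| R3: "\<lbrakk> JCtx \<Gamma> \<in> Jdg \<phi> \<Sigma>; i < length \<Gamma> \<rbrakk>
        \<Longrightarrow> JTm \<Gamma> (Var (fst (\<Gamma> ! i))) (snd (\<Gamma> ! i)) \<in> Jdg \<phi> \<Sigma>"
| R4: "\<lbrakk> TDecl \<Gamma> S is \<in> \<Sigma>; JCtx \<Delta> \<in> Jdg \<phi> \<Sigma>; JCtx \<Gamma> \<in> Jdg \<phi> \<Sigma>; length as = length \<Gamma>;
         \<forall>k < length \<Gamma>. JTm \<Delta> (as ! k)
            (substT (substL (take k (OV \<Gamma>)) (take k as)) (snd (\<Gamma> ! k))) \<in> Jdg \<phi> \<Sigma> \<rbrakk>
        \<Longrightarrow> JTy \<Delta> (PTy S (select as is)) \<in> Jdg \<phi> \<Sigma>"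
| R5: "\<lbrakk> FDecl \<Gamma> f is U \<in> \<Sigma>; JCtx \<Delta> \<in> Jdg \<phi> \<Sigma>; JCtx \<Gamma> \<in> Jdg \<phi> \<Sigma>; length as = length \<Gamma>;
         \<forall>k < length \<Gamma>. JTm \<Delta> (as ! k)
            (substT (substL (take k (OV \<Gamma>)) (take k as)) (snd (\<Gamma> ! k))) \<in> Jdg \<phi> \<Sigma>;
         JTy \<Delta> (substT (substL (OV \<Gamma>) as) U) \<in> Jdg \<phi> \<Sigma> \<rbrakk>
        \<Longrightarrow> JTm \<Delta> (App f (select as is)) (substT (substL (OV \<Gamma>) as) U) \<in> Jdg \<phi> \<Sigma>"

definition signature :: "('v set \<Rightarrow> 'v set) \<Rightarrow> ('v, 'f, 't) predecl set \<Rightarrow> bool" where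
  "signature \<phi> \<Sigma> \<longleftrightarrow> presignature \<phi> \<Sigma>
     \<and> (\<forall>\<Gamma> S is. TDecl \<Gamma> S is \<in> \<Sigma> \<longrightarrow> JCtx \<Gamma> \<in> Jdg \<phi> \<Sigma>)
     \<and> (\<forall>\<Gamma> f is U. FDecl \<Gamma> f is U \<in> \<Sigma> \<longrightarrow> JTy \<Gamma> U \<in> Jdg \<phi> \<Sigma>)"

section \<open>Variable systems\<close>

definition fresh_provider :: "('v set \<Rightarrow> 'v set) \<Rightarrow> ('v set \<Rightarrow> 'v) \<Rightarrow> bool" where
  "fresh_provider \<phi> fr \<longleftrightarrow> infinite (UNIV :: 'v set)
     \<and> (\<forall>X. finite X \<longrightarrow> \<phi> X \<subseteq> UNIV - X \<and> fr X \<in> \<phi> X)"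

definition de_Bruijn :: "('v set \<Rightarrow> 'v set) \<Rightarrow> ('v set \<Rightarrow> 'v) \<Rightarrow> bool" where
  "de_Bruijn \<phi> fr \<longleftrightarrow> (\<forall>X. finite X \<longrightarrow> \<phi> X = {fr X})"

section \<open>Categories with families\<close>

text \<open>Data of a cwf: objects 'o, morphisms 'm, types 'ty, terms 'tm.
  ext G A is G.A, pp G A is p_G(A), vv G A is v_A, pair G A f a is <f,a>_A.\<close>

record ('o, 'm, 'ty, 'tm) cwf_data =
  Ob :: "'o set"
  Hom :: "'o \<Rightarrow> 'o \<Rightarrow> 'm set"
  cmp :: "'m \<Rightarrow> 'm \<Rightarrow> 'm"
  idm :: "'o \<Rightarrow> 'm"
  trm :: "'o"
  Ty :: "'o \<Rightarrow> 'ty set"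
  tysub :: "'ty \<Rightarrow> 'm \<Rightarrow> 'ty"
  ext :: "'o \<Rightarrow> 'ty \<Rightarrow> 'o"
  pp :: "'o \<Rightarrow> 'ty \<Rightarrow> 'm"
  Tm :: "'o \<Rightarrow> 'ty \<Rightarrow> 'tm set"
  tmsub :: "'tm \<Rightarrow> 'm \<Rightarrow> 'tm"
  vv :: "'o \<Rightarrow> 'ty \<Rightarrow> 'tm"
  pair :: "'o \<Rightarrow> 'ty \<Rightarrow> 'm \<Rightarrow> 'tm \<Rightarrow> 'm"

definition is_category :: "('o, 'm, 'ty, 'tm, 'z) cwf_data_scheme \<Rightarrow> bool" where
  "is_category C \<longleftrightarrow>
     (\<forall>X Y f. f \<in> Hom C X Y \<longrightarrow> X \<in> Ob C \<and> Y \<in> Ob C)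
   \<and> (\<forall>X Y Z f g. f \<in> Hom C Y Z \<longrightarrow> g \<in> Hom C X Y \<longrightarrow> cmp C f g \<in> Hom C X Z)
   \<and> (\<forall>W X Y Z f g h. f \<in> Hom C Y Z \<longrightarrow> g \<in> Hom C X Y \<longrightarrow> h \<in> Hom C W X \<longrightarrow>
        cmp C (cmp C f g) h = cmp C f (cmp C g h))
   \<and> (\<forall>X \<in> Ob C. idm C X \<in> Hom C X X)
   \<and> (\<forall>X Y f. f \<in> Hom C X Y \<longrightarrow> cmp C (idm C Y) f = f \<and> cmp C f (idm C X) = f)"

definition is_terminal :: "('o, 'm, 'ty, 'tm, 'z) cwf_data_scheme \<Rightarrow> 'o \<Rightarrow> bool" where
  "is_terminal C T \<longleftrightarrow> T \<in> Ob C \<and> (\<forall>X \<in> Ob C. \<exists>!f. f \<in> Hom C X T)"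

definition is_cwf :: "('o, 'm, 'ty, 'tm, 'z) cwf_data_scheme \<Rightarrow> bool" where
  "is_cwf C \<longleftrightarrow> is_category C \<and> is_terminal C (trm C)
   \<comment> \<open>types and their substitution\<close>
   \<and> (\<forall>\<Gamma> \<Delta> A f. A \<in> Ty C \<Gamma> \<longrightarrow> f \<in> Hom C \<Delta> \<Gamma> \<longrightarrow> tysub C A f \<in> Ty C \<Delta>)
   \<and> (\<forall>\<Gamma> \<in> Ob C. \<forall>A \<in> Ty C \<Gamma>. tysub C A (idm C \<Gamma>) = A)
   \<and> (\<forall>\<Gamma> \<Delta> \<Theta> A f g. A \<in> Ty C \<Gamma> \<longrightarrow> f \<in> Hom C \<Delta> \<Gamma> \<longrightarrow> g \<in> Hom C \<Theta> \<Delta> \<longrightarrow>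
        tysub C A (cmp C f g) = tysub C (tysub C A f) g)
   \<comment> \<open>context comprehension and projection\<close>
   \<and> (\<forall>\<Gamma> \<in> Ob C. \<forall>A \<in> Ty C \<Gamma>. ext C \<Gamma> A \<in> Ob C \<and> pp C \<Gamma> A \<in> Hom C (ext C \<Gamma> A) \<Gamma>)
   \<comment> \<open>terms and their substitution\<close>
   \<and> (\<forall>\<Gamma> \<Delta> A a f. A \<in> Ty C \<Gamma> \<longrightarrow> a \<in> Tm C \<Gamma> A \<longrightarrow> f \<in> Hom C \<Delta> \<Gamma> \<longrightarrow>
        tmsub C a f \<in> Tm C \<Delta> (tysub C A f))
   \<and> (\<forall>\<Gamma> \<in> Ob C. \<forall>A \<in> Ty C \<Gamma>. \<forall>a \<in> Tm C \<Gamma> A. tmsub C a (idm C \<Gamma>) = a)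
   \<and> (\<forall>\<Gamma> \<Delta> \<Theta> A a f g. A \<in> Ty C \<Gamma> \<longrightarrow> a \<in> Tm C \<Gamma> A \<longrightarrow> f \<in> Hom C \<Delta> \<Gamma> \<longrightarrow>
        g \<in> Hom C \<Theta> \<Delta> \<longrightarrow> tmsub C a (cmp C f g) = tmsub C (tmsub C a f) g)
   \<comment> \<open>the variable\<close>
   \<and> (\<forall>\<Gamma> \<in> Ob C. \<forall>A \<in> Ty C \<Gamma>. vv C \<Gamma> A \<in> Tm C (ext C \<Gamma> A) (tysub C A (pp C \<Gamma> A)))
   \<comment> \<open>extension of morphisms and its laws\<close>
   \<and> (\<forall>\<Gamma> \<Delta> A f a. \<Gamma> \<in> Ob C \<longrightarrow> A \<in> Ty C \<Gamma> \<longrightarrow> f \<in> Hom C \<Delta> \<Gamma> \<longrightarrow> a \<in> Tm C \<Delta> (tysub C A f) \<longrightarrow>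
        pair C \<Gamma> A f a \<in> Hom C \<Delta> (ext C \<Gamma> A)
      \<and> cmp C (pp C \<Gamma> A) (pair C \<Gamma> A f a) = f
      \<and> tmsub C (vv C \<Gamma> A) (pair C \<Gamma> A f a) = a
      \<and> (\<forall>\<Theta> g. g \<in> Hom C \<Theta> \<Delta> \<longrightarrow>
           cmp C (pair C \<Gamma> A f a) g = pair C \<Gamma> A (cmp C f g) (tmsub C a g)))
   \<and> (\<forall>\<Gamma> \<Delta> A h. \<Gamma> \<in> Ob C \<longrightarrow> A \<in> Ty C \<Gamma> \<longrightarrow> h \<in> Hom C \<Delta> (ext C \<Gamma> A) \<longrightarrow>
        pair C \<Gamma> A (cmp C (pp C \<Gamma> A) h) (tmsub C (vv C \<Gamma> A) h) = h)"

definition ext_iter :: "('o, 'm, 'ty, 'tm, 'z) cwf_data_scheme \<Rightarrow> 'ty list \<Rightarrow> 'o" where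
  "ext_iter C As = foldl (ext C) (trm C) As"

definition is_tower :: "('o, 'm, 'ty, 'tm, 'z) cwf_data_scheme \<Rightarrow> 'ty list \<Rightarrow> bool" where
  "is_tower C As \<longleftrightarrow> (\<forall>k < length As. As ! k \<in> Ty C (ext_iter C (take k As)))"

definition is_contextual_cwf :: "('o, 'm, 'ty, 'tm, 'z) cwf_data_scheme \<Rightarrow> bool" where
  "is_contextual_cwf C \<longleftrightarrow> is_cwf C
     \<and> (\<forall>\<Gamma> \<in> Ob C. \<exists>!As. is_tower C As \<and> ext_iter C As = \<Gamma>)"

section \<open>The cwf F_Sigma\<close>

type_synonym ('v, 'f, 't) Fmor = "('v, 'f, 't) pctx \<times> ('v, 'f, 't) pctx \<times> ('v, 'f) pelem list"
type_synonym ('v, 'f, 't) Fty = "('v, 'f, 't) pctx \<times> ('v, 'f, 't) ptype"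
type_synonym ('v, 'f, 't) Ftm = "('v, 'f, 't) Fty \<times> ('v, 'f) pelem"

definition freshC :: "('v set \<Rightarrow> 'v) \<Rightarrow> ('v, 'f, 't) pctx \<Rightarrow> 'v" where
  "freshC fr \<Gamma> = fr (VC \<Gamma>)"

definition FSig :: "('v set \<Rightarrow> 'v set) \<Rightarrow> ('v set \<Rightarrow> 'v) \<Rightarrow> ('v, 'f, 't) predecl set
    \<Rightarrow> (('v, 'f, 't) pctx, ('v, 'f, 't) Fmor, ('v, 'f, 't) Fty, ('v, 'f, 't) Ftm) cwf_data" where
  "FSig \<phi> fr \<Sigma> = \<lparr>
     Ob = {\<Gamma>. precontext \<phi> \<Gamma> \<and> JCtx \<Gamma> \<in> Jdg \<phi> \<Sigma>},
     Hom = (\<lambda>\<Delta> \<Gamma>. {(\<Delta>, \<Gamma>, as) | as. precontext \<phi> \<Delta> \<and> precontext \<phi> \<Gamma>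
                                     \<and> cmapJ (Jdg \<phi> \<Sigma>) \<Delta> \<Gamma> as}),
     cmp = (\<lambda>(\<Gamma>, \<Theta>, ts) (\<Delta>, \<Gamma>', ss). (\<Delta>, \<Theta>, map (substE (substL (OV \<Gamma>) ss)) ts)),
     idm = (\<lambda>\<Gamma>. (\<Gamma>, \<Gamma>, map Var (OV \<Gamma>))),
     trm = [],
     Ty = (\<lambda>\<Gamma>. {(\<Gamma>, A) | A. JTy \<Gamma> A \<in> Jdg \<phi> \<Sigma>}),
     tysub = (\<lambda>(\<Gamma>, A) (\<Delta>, \<Gamma>', as). (\<Delta>, substT (substL (OV \<Gamma>) as) A)),
     ext = (\<lambda>\<Gamma> (\<Gamma>', S). \<Gamma> @ [(freshC fr \<Gamma>, S)]),
     pp = (\<lambda>\<Gamma> (\<Gamma>', S). (\<Gamma> @ [(freshC fr \<Gamma>, S)], \<Gamma>, map Var (OV \<Gamma>))),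
     Tm = (\<lambda>\<Gamma> (\<Gamma>', A). {((\<Gamma>, A), a) | a. \<Gamma>' = \<Gamma> \<and> JTm \<Gamma> a A \<in> Jdg \<phi> \<Sigma>}),
     tmsub = (\<lambda>((\<Gamma>, A), a) (\<Delta>, \<Gamma>', as).
                 ((\<Delta>, substT (substL (OV \<Gamma>) as) A), substE (substL (OV \<Gamma>) as) a)),
     vv = (\<lambda>\<Gamma> (\<Gamma>', S). ((\<Gamma> @ [(freshC fr \<Gamma>, S)], S), Var (freshC fr \<Gamma>))),
     pair = (\<lambda>\<Gamma> (\<Gamma>', S) (\<Delta>, \<Gamma>'', ss) (DA, b). (\<Delta>, \<Gamma> @ [(freshC fr \<Gamma>, S)], ss @ [b]))
   \<rparr>"

end

theory Submission
  imports Defs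
begin

text \<open>
  Every cwf law for \<open>F\<^sub>\<Sigma>\<close> is an identity of simultaneous substitutions, provided substitution
  stays inside the derivable judgements. That is the substitution lemma: a derivable judgement
  in context \<open>\<Gamma>\<close> remains derivable when transported along a context map \<open>\<Delta> \<rightarrow> \<Gamma>\<close>, proved by
  induction on derivations; composition of context maps is its special case. Distinctness of
  the variables of a context, guaranteed by the fresh variable provider, makes a context map
  determined by its values on \<open>OV \<Gamma>\<close>, which gives the identity and \<open>\<eta>\<close>-laws.

  With the de Bruijn property the variable introduced by rule R2 is forced to be
  \<open>fresh(\<Gamma>)\<close>, so every derivable context is an iterated comprehension
  \<open>\<top>.A\<^sub>1\<dots>A\<^sub>n\<close>; the sequence is unique because a type of \<open>F\<^sub>\<Sigma>\<close> records its context.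
\<close>

section \<open>Simultaneous substitution\<close>

lemma substE_cong: "(\<And>x. x \<in> varsE e \<Longrightarrow> \<sigma> x = \<tau> x) \<Longrightarrow> substE \<sigma> e = substE \<tau> e"
  by (induction e) auto

lemma substT_cong: "(\<And>x. x \<in> varsT A \<Longrightarrow> \<sigma> x = \<tau> x) \<Longrightarrow> substT \<sigma> A = substT \<tau> A"
  by (cases A) (auto intro: substE_cong)

lemma substE_substE: "substE \<sigma> (substE \<tau> e) = substE (\<lambda>x. substE \<sigma> (\<tau> x)) e"
  by (induction e) auto

lemma substT_substT: "substT \<sigma> (substT \<tau> A) = substT (\<lambda>x. substE \<sigma> (\<tau> x)) A"
  by (cases A) (auto simp: substE_substE)

lemma substE_Var [simp]: "substE Var e = e"
  by (induction e) (auto simp: map_idI)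

lemma substT_Var [simp]: "substT Var A = A"
  by (cases A) (auto simp: map_idI)

lemma substL_Var [simp]: "substL xs (map Var xs) = Var"
proof
  show "substL xs (map Var xs) x = Var x" for x
    by (induction xs) (auto simp: substL_def split: option.splits)
qed

lemma substL_Cons: "substL (y # xs) (b # as) x = (if x = y then b else substL xs as x)"
  by (simp add: substL_def)

lemma substL_map:
  "length xs = length as \<Longrightarrow> x \<in> set xs \<Longrightarrow> substL xs (map f as) x = f (substL xs as x)"
proof (induction xs arbitrary: as)
  case (Cons y xs)
  then show ?case by (cases as) (auto simp: substL_Cons)
qed simp

lemma substL_take:
  "length xs = length as \<Longrightarrow> x \<in> set (take k xs) \<Longrightarrow>
   substL (take k xs) (take k as) x = substL xs as x"
proof (induction xs arbitrary: as k)
  case (Cons y xs)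
  then show ?case by (cases as; cases k) (auto simp: substL_Cons)
qed simp

lemma substL_snoc:
  "length xs = length as \<Longrightarrow> y \<notin> set xs \<Longrightarrow> substL (xs @ [y]) (as @ [b]) = (substL xs as)(y := b)"
proof (induction xs arbitrary: as)
  case Nil
  then show ?case by (auto simp: substL_def)
next
  case (Cons z xs)
  then show ?case by (cases as) (auto simp: substL_Cons)
qed

lemma substL_nth:
  "distinct xs \<Longrightarrow> length xs = length as \<Longrightarrow> i < length xs \<Longrightarrow> substL xs as (xs ! i) = as ! i"
proof (induction xs arbitrary: as i)
  case (Cons y xs)
  then show ?case by (cases as; cases i) (auto simp: substL_Cons)
qed simp

lemma map_substL_self: "distinct xs \<Longrightarrow> length xs = length as \<Longrightarrow> map (substL xs as) xs = as"
  by (rule nth_equalityI) (auto simp: substL_nth)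

lemma substT_substL:
  "varsT A \<subseteq> set xs \<Longrightarrow> length xs = length as \<Longrightarrow>
   substT \<sigma> (substT (substL xs as) A) = substT (substL xs (map (substE \<sigma>) as)) A"
  unfolding substT_substT by (rule substT_cong) (auto simp: substL_map)

lemma substE_substL:
  "varsE a \<subseteq> set xs \<Longrightarrow> length xs = length as \<Longrightarrow>
   substE \<sigma> (substE (substL xs as) a) = substE (substL xs (map (substE \<sigma>) as)) a"
  unfolding substE_substE by (rule substE_cong) (auto simp: substL_map)

lemma map_select: "\<forall>i \<in> set ixs. i < length as \<Longrightarrow> map f (select as ixs) = select (map f as) ixs"
  by (simp add: select_def)

lemma OV_append [simp]: "OV (\<Gamma> @ \<Delta>) = OV \<Gamma> @ OV \<Delta>"
  by (simp add: OV_def)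

lemma OV_Nil [simp]: "OV [] = []"
  by (simp add: OV_def)

lemma OV_Cons [simp]: "OV ((x, A) # \<Gamma>) = x # OV \<Gamma>"
  by (simp add: OV_def)

lemma length_OV [simp]: "length (OV \<Gamma>) = length \<Gamma>"
  by (simp add: OV_def)

lemma OV_take: "OV (take k \<Gamma>) = take k (OV \<Gamma>)"
  by (simp add: OV_def take_map)

lemma OV_nth: "k < length \<Gamma> \<Longrightarrow> OV \<Gamma> ! k = fst (\<Gamma> ! k)"
  by (simp add: OV_def)

lemma finite_VC: "finite (VC \<Gamma>)"
  by (simp add: VC_def)

lemma precontext_snoc:
  "precontext \<phi> (\<Gamma> @ [(x, A)]) \<longleftrightarrow> precontext \<phi> \<Gamma> \<and> x \<in> \<phi> (VC \<Gamma>) \<and> varsT A \<subseteq> VC \<Gamma>"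
  unfolding precontext_def by (auto simp: nth_append less_Suc_eq)

lemma precontext_entry_vars:
  "precontext \<phi> \<Gamma> \<Longrightarrow> k < length \<Gamma> \<Longrightarrow> varsT (snd (\<Gamma> ! k)) \<subseteq> set (take k (OV \<Gamma>))"
  unfolding precontext_def by (simp add: VC_def OV_take)

lemma distinct_OV:
  assumes fp: "fresh_provider \<phi> fr" and pc: "precontext \<phi> \<Gamma>"
  shows "distinct (OV \<Gamma>)"
  unfolding distinct_conv_nth
proof (intro allI impI)
  have new: "OV \<Gamma> ! j \<notin> set (take j (OV \<Gamma>))" if "j < length \<Gamma>" for j
    using fp pc that finite_VC[of "take j \<Gamma>"]
    unfolding fresh_provider_def precontext_def by (auto simp: OV_nth VC_def OV_take)
  fix i j assume "i < length (OV \<Gamma>)" "j < length (OV \<Gamma>)" "i \<noteq> j"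
  then consider "i < j" "j < length \<Gamma>" | "j < i" "i < length \<Gamma>"
    by fastforce
  then show "OV \<Gamma> ! i \<noteq> OV \<Gamma> ! j"
    by cases (metis new length_OV in_set_conv_nth length_take min.absorb4 nth_take)+
qed

fun judg_ctx :: "('v, 'f, 't) judg \<Rightarrow> ('v, 'f, 't) pctx" where
  "judg_ctx (JCtx \<Gamma>) = \<Gamma>"
| "judg_ctx (JTy \<Gamma> A) = \<Gamma>"
| "judg_ctx (JTm \<Gamma> a A) = \<Gamma>"

fun judg_vars :: "('v, 'f, 't) judg \<Rightarrow> 'v set" where
  "judg_vars (JCtx \<Gamma>) = {}"
| "judg_vars (JTy \<Gamma> A) = varsT A"
| "judg_vars (JTm \<Gamma> a A) = varsE a \<union> varsT A"

fun subst_judg :: "('v, 'f, 't) pctx \<Rightarrow> ('v, 'f) pelem list \<Rightarrow> ('v, 'f, 't) judg \<Rightarrow> ('v, 'f, 't) judg"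
  where
  "subst_judg \<Delta> ss (JCtx \<Gamma>) = JCtx \<Delta>"
| "subst_judg \<Delta> ss (JTy \<Gamma> A) = JTy \<Delta> (substT (substL (OV \<Gamma>) ss) A)"
| "subst_judg \<Delta> ss (JTm \<Gamma> a A) =
     JTm \<Delta> (substE (substL (OV \<Gamma>) ss) a) (substT (substL (OV \<Gamma>) ss) A)"

lemma presignature_TDecl:
  assumes "presignature \<phi> \<Sigma>" "TDecl \<Gamma> S ixs \<in> \<Sigma>"
  shows "\<forall>i \<in> set ixs. i < length \<Gamma>"
proof -
  have "predecl_ok \<phi> (TDecl \<Gamma> S ixs)" using assms unfolding presignature_def by blast
  then show ?thesis by (simp add: determining_def)
qed

lemma presignature_FDecl:
  assumes "presignature \<phi> \<Sigma>" "FDecl \<Gamma> f ixs U \<in> \<Sigma>"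
  shows "(\<forall>i \<in> set ixs. i < length \<Gamma>) \<and> varsT U \<subseteq> set (OV \<Gamma>)"
proof -
  have "predecl_ok \<phi> (FDecl \<Gamma> f ixs U)" using assms unfolding presignature_def by blast
  then show ?thesis by (simp add: determining_def VC_def)
qed

lemma Jdg_scoped:
  assumes sig: "presignature \<phi> \<Sigma>" and "j \<in> Jdg \<phi> \<Sigma>"
  shows "precontext \<phi> (judg_ctx j) \<and> judg_vars j \<subseteq> VC (judg_ctx j)"
  using \<open>j \<in> Jdg \<phi> \<Sigma>\<close>
proof (induction rule: Jdg.induct)
  case R1
  then show ?case by (simp add: precontext_def)
next
  case (R2 \<Gamma> A x)
  then show ?case by (simp add: precontext_snoc)
next
  case (R3 \<Gamma> i)
  have pc: "precontext \<phi> \<Gamma>" using R3.IH by simp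
  have "varsT (snd (\<Gamma> ! i)) \<subseteq> set (OV \<Gamma>)"
    using precontext_entry_vars[OF pc R3.hyps(2)] by (auto dest: in_set_takeD)
  moreover have "fst (\<Gamma> ! i) \<in> set (OV \<Gamma>)"
    using R3.hyps(2) nth_mem[of i "OV \<Gamma>"] by (simp add: OV_nth)
  ultimately show ?case using pc by (simp add: VC_def)
next
  case (R4 \<Theta> S ixs \<Delta> as)
  have "varsE (as ! i) \<subseteq> VC \<Delta>" if "i \<in> set ixs" for i
  proof -
    have "i < length \<Theta>" using presignature_TDecl[OF sig R4.hyps(1)] that by blast
    then show ?thesis using R4.IH(3) unfolding judg_vars.simps judg_ctx.simps by blast
  qed
  then show ?case using R4.IH(1) by (auto simp: select_def)
next
  case (R5 \<Theta> f ixs U \<Delta> as)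
  have "varsE (as ! i) \<subseteq> VC \<Delta>" if "i \<in> set ixs" for i
  proof -
    have "i < length \<Theta>" using presignature_FDecl[OF sig R5.hyps(1)] that by blast
    then show ?thesis using R5.IH(3) unfolding judg_vars.simps judg_ctx.simps by blast
  qed
  then show ?case using R5.IH(1,4) by (auto simp: select_def)
qed

lemma Jdg_snoc_ctx_inv:
  "JCtx (\<Gamma> @ [(x, A)]) \<in> Jdg \<phi> \<Sigma> \<Longrightarrow>
   JCtx \<Gamma> \<in> Jdg \<phi> \<Sigma> \<and> JTy \<Gamma> A \<in> Jdg \<phi> \<Sigma> \<and> x \<in> \<phi> (VC \<Gamma>)"
  by (erule Jdg.cases) auto

lemma Jdg_ctx_precontext: "presignature \<phi> \<Sigma> \<Longrightarrow> JCtx \<Gamma> \<in> Jdg \<phi> \<Sigma> \<Longrightarrow> precontext \<phi> \<Gamma>"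
  using Jdg_scoped[of \<phi> \<Sigma> "JCtx \<Gamma>"] by simp

lemma Jdg_ty_scoped: "presignature \<phi> \<Sigma> \<Longrightarrow> JTy \<Gamma> A \<in> Jdg \<phi> \<Sigma> \<Longrightarrow> varsT A \<subseteq> set (OV \<Gamma>)"
  using Jdg_scoped[of \<phi> \<Sigma> "JTy \<Gamma> A"] by (simp add: VC_def)

lemma Jdg_tm_scoped:
  "presignature \<phi> \<Sigma> \<Longrightarrow> JTm \<Gamma> a A \<in> Jdg \<phi> \<Sigma> \<Longrightarrow> varsE a \<union> varsT A \<subseteq> set (OV \<Gamma>)"
  using Jdg_scoped[of \<phi> \<Sigma> "JTm \<Gamma> a A"] by (simp add: VC_def)

lemma precontext_entry_subst:
  assumes "precontext \<phi> \<Gamma>" "length as = length \<Gamma>" "k < length \<Gamma>"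
  shows "substT (substL (take k (OV \<Gamma>)) (take k as)) (snd (\<Gamma> ! k))
       = substT (substL (OV \<Gamma>) as) (snd (\<Gamma> ! k))"
  using precontext_entry_vars[OF assms(1,3)] assms(2) by (intro substT_cong) (auto simp: substL_take)

lemma cmapJ_iff:
  assumes "precontext \<phi> \<Gamma>"
  shows "cmapJ J \<Delta> \<Gamma> as \<longleftrightarrow> JCtx \<Delta> \<in> J \<and> JCtx \<Gamma> \<in> J \<and> length as = length \<Gamma>
     \<and> (\<forall>k < length \<Gamma>. JTm \<Delta> (as ! k) (substT (substL (OV \<Gamma>) as) (snd (\<Gamma> ! k))) \<in> J)"
  using precontext_entry_subst[OF assms] unfolding cmapJ_def by auto

lemma cmapJ_weaken:
  assumes "JCtx (\<Gamma> @ \<Gamma>') \<in> Jdg \<phi> \<Sigma>" "JCtx \<Gamma> \<in> Jdg \<phi> \<Sigma>"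
  shows "cmapJ (Jdg \<phi> \<Sigma>) (\<Gamma> @ \<Gamma>') \<Gamma> (map Var (OV \<Gamma>))"
proof -
  have "JTm (\<Gamma> @ \<Gamma>') (Var (fst (\<Gamma> ! k))) (snd (\<Gamma> ! k)) \<in> Jdg \<phi> \<Sigma>" if "k < length \<Gamma>" for k
    using Jdg.R3[OF assms(1), of k] that by (simp add: nth_append)
  then show ?thesis using assms by (simp add: cmapJ_def take_map OV_nth)
qed

lemma cmapJ_snoc:
  assumes "cmapJ J \<Delta> \<Gamma> ss" "JCtx (\<Gamma> @ [(x, S)]) \<in> J"
    and "JTm \<Delta> b (substT (substL (OV \<Gamma>) ss) S) \<in> J"
  shows "cmapJ J \<Delta> (\<Gamma> @ [(x, S)]) (ss @ [b])"
  using assms unfolding cmapJ_def by (auto simp: nth_append less_Suc_eq OV_def)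

lemma Jdg_TDecl_cmapJ:
  "TDecl \<Gamma> S ixs \<in> \<Sigma> \<Longrightarrow> cmapJ (Jdg \<phi> \<Sigma>) \<Delta> \<Gamma> as \<Longrightarrow> JTy \<Delta> (PTy S (select as ixs)) \<in> Jdg \<phi> \<Sigma>"
  unfolding cmapJ_def by (blast intro: Jdg.R4)

lemma Jdg_FDecl_cmapJ:
  "FDecl \<Gamma> f ixs U \<in> \<Sigma> \<Longrightarrow> cmapJ (Jdg \<phi> \<Sigma>) \<Delta> \<Gamma> as \<Longrightarrow>
   JTy \<Delta> (substT (substL (OV \<Gamma>) as) U) \<in> Jdg \<phi> \<Sigma> \<Longrightarrow>
   JTm \<Delta> (App f (select as ixs)) (substT (substL (OV \<Gamma>) as) U) \<in> Jdg \<phi> \<Sigma>"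
  unfolding cmapJ_def by (blast intro: Jdg.R5)

section \<open>The substitution lemma\<close>

locale syntactic_cwf =
  fixes \<phi> :: "'v set \<Rightarrow> 'v set" and fr :: "'v set \<Rightarrow> 'v"
    and \<Sigma> :: "('v, 'f, 't) predecl set"
  assumes fresh: "fresh_provider \<phi> fr" and presig: "presignature \<phi> \<Sigma>"
begin

abbreviation J :: "('v, 'f, 't) judg set" where
  "J \<equiv> Jdg \<phi> \<Sigma>"

lemma freshC_mem: "freshC fr \<Gamma> \<in> \<phi> (VC \<Gamma>)"
  using fresh finite_VC[of \<Gamma>] unfolding fresh_provider_def freshC_def by blast

lemma freshC_notin: "freshC fr \<Gamma> \<notin> set (OV \<Gamma>)"
  using fresh finite_VC[of \<Gamma>] unfolding fresh_provider_def freshC_def VC_def by blast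

lemma cmapJ_distinct: "cmapJ J \<Delta> \<Gamma> ss \<Longrightarrow> distinct (OV \<Gamma>)"
  by (intro distinct_OV[OF fresh] Jdg_ctx_precontext[OF presig]) (simp add: cmapJ_def)

lemma cmapJ_vars: "cmapJ J \<Delta> \<Gamma> ss \<Longrightarrow> t \<in> set ss \<Longrightarrow> varsE t \<subseteq> set (OV \<Delta>)"
  unfolding cmapJ_def in_set_conv_nth using Jdg_tm_scoped[OF presig] by fastforce

lemma cmapJ_comp_transport:
  assumes ts: "cmapJ J \<Gamma> \<Theta> ts" and ss: "cmapJ J \<Delta> \<Gamma> ss"
    and transport: "\<And>k. k < length \<Theta> \<Longrightarrow>
      subst_judg \<Delta> ss (JTm \<Gamma> (ts ! k) (substT (substL (take k (OV \<Theta>)) (take k ts)) (snd (\<Theta> ! k)))) \<in> J"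
  shows "cmapJ J \<Delta> \<Theta> (map (substE (substL (OV \<Gamma>) ss)) ts)"
proof -
  let ?\<sigma> = "substL (OV \<Gamma>) ss"
  have "JCtx \<Theta> \<in> J" and len: "length ts = length \<Theta>" using ts by (simp_all add: cmapJ_def)
  then have pc: "precontext \<phi> \<Theta>" by (simp add: Jdg_ctx_precontext[OF presig])
  have "JTm \<Delta> (substE ?\<sigma> (ts ! k)) (substT (substL (OV \<Theta>) (map (substE ?\<sigma>) ts)) (snd (\<Theta> ! k))) \<in> J"
    if k: "k < length \<Theta>" for k
  proof -
    have "varsT (snd (\<Theta> ! k)) \<subseteq> set (OV \<Theta>)"
      using precontext_entry_vars[OF pc k] by (auto dest: in_set_takeD)
    from substT_substL[OF this, of ts ?\<sigma>] show ?thesis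
      using transport[OF k] precontext_entry_subst[OF pc len k] len by simp
  qed
  then show ?thesis using ts ss len unfolding cmapJ_iff[OF pc] by (simp add: cmapJ_def)
qed

lemma Jdg_subst:
  assumes "j \<in> J" "cmapJ J \<Delta> (judg_ctx j) ss"
  shows "subst_judg \<Delta> ss j \<in> J"
  using assms
proof (induction arbitrary: \<Delta> ss rule: Jdg.induct)
  case R1
  then show ?case by (simp add: cmapJ_def)
next
  case (R2 \<Gamma> A x)
  then show ?case by (simp add: cmapJ_def)
next
  case (R3 \<Gamma> i)
  have pc: "precontext \<phi> \<Gamma>" using Jdg_ctx_precontext[OF presig R3.hyps(1)] .
  have cm: "cmapJ J \<Delta> \<Gamma> ss" using R3.prems by simp
  then have len: "length ss = length \<Gamma>" by (simp add: cmapJ_def)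
  have "substL (OV \<Gamma>) ss (fst (\<Gamma> ! i)) = ss ! i"
    using substL_nth[OF distinct_OV[OF fresh pc], of ss i] len R3.hyps(2) by (simp add: OV_nth)
  then show ?case using cm R3.hyps(2) unfolding cmapJ_iff[OF pc] by simp
next
  case (R4 \<Theta> S ixs \<Gamma> as)
  let ?\<sigma> = "substL (OV \<Gamma>) ss"
  have cm: "cmapJ J \<Delta> \<Gamma> ss" using R4.prems by simp
  have "cmapJ J \<Gamma> \<Theta> as" using R4.hyps(2-4) R4.IH(3) by (simp add: cmapJ_def)
  then have "cmapJ J \<Delta> \<Theta> (map (substE ?\<sigma>) as)"
    using R4.IH(3) cm by (intro cmapJ_comp_transport) simp_all
  then have "JTy \<Delta> (PTy S (select (map (substE ?\<sigma>) as) ixs)) \<in> J"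
    by (rule Jdg_TDecl_cmapJ[OF R4.hyps(1)])
  moreover have "\<forall>i \<in> set ixs. i < length as"
    using presignature_TDecl[OF presig R4.hyps(1)] R4.hyps(4) by simp
  ultimately show ?case by (simp add: map_select)
next
  case (R5 \<Theta> f ixs U \<Gamma> as)
  let ?\<sigma> = "substL (OV \<Gamma>) ss"
  have cm: "cmapJ J \<Delta> \<Gamma> ss" using R5.prems by simp
  have decl: "\<forall>i \<in> set ixs. i < length as" "varsT U \<subseteq> set (OV \<Theta>)"
    using presignature_FDecl[OF presig R5.hyps(1)] R5.hyps(4) by simp_all
  have U: "substT ?\<sigma> (substT (substL (OV \<Theta>) as) U) = substT (substL (OV \<Theta>) (map (substE ?\<sigma>) as)) U"
    using substT_substL[OF decl(2)] R5.hyps(4) by simp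
  have "cmapJ J \<Gamma> \<Theta> as" using R5.hyps(2-4) R5.IH(3) by (simp add: cmapJ_def)
  then have "cmapJ J \<Delta> \<Theta> (map (substE ?\<sigma>) as)"
    using R5.IH(3) cm by (intro cmapJ_comp_transport) simp_all
  moreover have "JTy \<Delta> (substT (substL (OV \<Theta>) (map (substE ?\<sigma>) as)) U) \<in> J"
    using R5.IH(4)[of \<Delta> ss] cm by (simp add: U)
  ultimately have "JTm \<Delta> (App f (select (map (substE ?\<sigma>) as) ixs))
      (substT (substL (OV \<Theta>) (map (substE ?\<sigma>) as)) U) \<in> J"
    by (rule Jdg_FDecl_cmapJ[OF R5.hyps(1)])
  then show ?case using decl(1) U by (simp add: map_select)
qed

lemma Jdg_subst_ty:
  "JTy \<Gamma> A \<in> J \<Longrightarrow> cmapJ J \<Delta> \<Gamma> ss \<Longrightarrow> JTy \<Delta> (substT (substL (OV \<Gamma>) ss) A) \<in> J"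
  using Jdg_subst[of "JTy \<Gamma> A"] by simp

lemma Jdg_subst_tm:
  "JTm \<Gamma> a A \<in> J \<Longrightarrow> cmapJ J \<Delta> \<Gamma> ss \<Longrightarrow>
   JTm \<Delta> (substE (substL (OV \<Gamma>) ss) a) (substT (substL (OV \<Gamma>) ss) A) \<in> J"
  using Jdg_subst[of "JTm \<Gamma> a A"] by simp

lemma cmapJ_comp:
  assumes "cmapJ J \<Gamma> \<Theta> ts" "cmapJ J \<Delta> \<Gamma> ss"
  shows "cmapJ J \<Delta> \<Theta> (map (substE (substL (OV \<Gamma>) ss)) ts)"
  using assms by (intro cmapJ_comp_transport Jdg_subst) (simp_all add: cmapJ_def)

lemma Jdg_ext:
  assumes "JCtx \<Gamma> \<in> J" "JTy \<Gamma> S \<in> J"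
  shows "JCtx (\<Gamma> @ [(freshC fr \<Gamma>, S)]) \<in> J"
  using assms freshC_mem by (rule Jdg.R2)

end

section \<open>The category with families \<open>F\<^sub>\<Sigma>\<close>\<close>

lemma FSig_Ty: "A \<in> Ty (FSig \<phi> fr \<Sigma>) \<Gamma> \<longleftrightarrow> (\<exists>S. A = (\<Gamma>, S) \<and> JTy \<Gamma> S \<in> Jdg \<phi> \<Sigma>)"
  by (auto simp: FSig_def)

lemma FSig_Tm: "a \<in> Tm (FSig \<phi> fr \<Sigma>) \<Gamma> (\<Gamma>', S) \<longleftrightarrow> (\<exists>b. a = ((\<Gamma>, S), b) \<and> \<Gamma>' = \<Gamma> \<and> JTm \<Gamma> b S \<in> Jdg \<phi> \<Sigma>)"
  by (auto simp: FSig_def)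

lemma FSig_simps:
  "cmp (FSig \<phi> fr \<Sigma>) (\<Gamma>, \<Theta>, ts) (\<Delta>, \<Gamma>', ss) = (\<Delta>, \<Theta>, map (substE (substL (OV \<Gamma>) ss)) ts)"
  "idm (FSig \<phi> fr \<Sigma>) \<Gamma> = (\<Gamma>, \<Gamma>, map Var (OV \<Gamma>))"
  "trm (FSig \<phi> fr \<Sigma>) = []"
  "tysub (FSig \<phi> fr \<Sigma>) (\<Gamma>, A) (\<Delta>, \<Gamma>', as) = (\<Delta>, substT (substL (OV \<Gamma>) as) A)"
  "ext (FSig \<phi> fr \<Sigma>) \<Gamma> (\<Gamma>', S) = \<Gamma> @ [(freshC fr \<Gamma>, S)]"
  "pp (FSig \<phi> fr \<Sigma>) \<Gamma> (\<Gamma>', S) = (\<Gamma> @ [(freshC fr \<Gamma>, S)], \<Gamma>, map Var (OV \<Gamma>))"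
  "tmsub (FSig \<phi> fr \<Sigma>) ((\<Gamma>, A), a) (\<Delta>, \<Gamma>', as) =
     ((\<Delta>, substT (substL (OV \<Gamma>) as) A), substE (substL (OV \<Gamma>) as) a)"
  "vv (FSig \<phi> fr \<Sigma>) \<Gamma> (\<Gamma>', S) = ((\<Gamma> @ [(freshC fr \<Gamma>, S)], S), Var (freshC fr \<Gamma>))"
  "pair (FSig \<phi> fr \<Sigma>) \<Gamma> (\<Gamma>', S) (\<Delta>, \<Gamma>'', ss) (DA, b) = (\<Delta>, \<Gamma> @ [(freshC fr \<Gamma>, S)], ss @ [b])"
  by (simp_all add: FSig_def)

context syntactic_cwf
begin

abbreviation F :: "(('v, 'f, 't) pctx, ('v, 'f, 't) Fmor, ('v, 'f, 't) Fty, ('v, 'f, 't) Ftm) cwf_data"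
  where
  "F \<equiv> FSig \<phi> fr \<Sigma>"

lemma FSig_Ob: "\<Gamma> \<in> Ob F \<longleftrightarrow> JCtx \<Gamma> \<in> J"
  using Jdg_ctx_precontext[OF presig] by (auto simp: FSig_def)

lemma FSig_Hom: "f \<in> Hom F \<Delta> \<Gamma> \<longleftrightarrow> (\<exists>as. f = (\<Delta>, \<Gamma>, as) \<and> cmapJ J \<Delta> \<Gamma> as)"
  using Jdg_ctx_precontext[OF presig] by (auto simp: FSig_def cmapJ_def)

lemma FSig_Hom_Ob: "f \<in> Hom F X Y \<Longrightarrow> X \<in> Ob F \<and> Y \<in> Ob F"
  by (auto simp: FSig_Hom FSig_Ob cmapJ_def)

lemma FSig_cmp_Hom: "f \<in> Hom F Y Z \<Longrightarrow> g \<in> Hom F X Y \<Longrightarrow> cmp F f g \<in> Hom F X Z"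
  by (auto simp: FSig_Hom FSig_simps intro: cmapJ_comp)

lemma FSig_cmp_assoc:
  assumes "f \<in> Hom F Y Z" "g \<in> Hom F X Y" "h \<in> Hom F W X"
  shows "cmp F (cmp F f g) h = cmp F f (cmp F g h)"
proof -
  obtain ts ss rs where f: "f = (Y, Z, ts)" "cmapJ J Y Z ts" and g: "g = (X, Y, ss)" "cmapJ J X Y ss"
    and h: "h = (W, X, rs)"
    using assms by (auto simp: FSig_Hom)
  have "substE \<sigma> (substE (substL (OV Y) ss) t) = substE (substL (OV Y) (map (substE \<sigma>) ss)) t"
    if "t \<in> set ts" for t \<sigma>
    using substE_substL[OF cmapJ_vars[OF f(2) that]] g(2) by (simp add: cmapJ_def)
  then show ?thesis using f g h by (simp add: FSig_simps)
qed

lemma FSig_idm_Hom: "X \<in> Ob F \<Longrightarrow> idm F X \<in> Hom F X X"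
  using cmapJ_weaken[of X "[]"] by (simp add: FSig_Ob FSig_Hom FSig_simps)

lemma FSig_idm_neutral:
  assumes "f \<in> Hom F X Y"
  shows "cmp F (idm F Y) f = f \<and> cmp F f (idm F X) = f"
proof -
  obtain ss where f: "f = (X, Y, ss)" "cmapJ J X Y ss" using assms by (auto simp: FSig_Hom)
  have "length (OV Y) = length ss" using f(2) by (simp add: cmapJ_def)
  then have "map (substL (OV Y) ss) (OV Y) = ss" by (rule map_substL_self[OF cmapJ_distinct[OF f(2)]])
  then show ?thesis using f by (simp add: FSig_simps comp_def map_idI)
qed

lemma FSig_category: "is_category F"
  unfolding is_category_def
  using FSig_Hom_Ob FSig_cmp_Hom FSig_cmp_assoc FSig_idm_Hom FSig_idm_neutral by blast

lemma FSig_terminal: "is_terminal F (trm F)"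
proof -
  have "\<exists>!f. f \<in> Hom F X []" if "X \<in> Ob F" for X
  proof
    show "(X, [], []) \<in> Hom F X []" using that Jdg.R1 by (simp add: FSig_Hom FSig_Ob cmapJ_def)
    show "f = (X, [], [])" if "f \<in> Hom F X []" for f using that by (auto simp: FSig_Hom cmapJ_def)
  qed
  then show ?thesis by (simp add: is_terminal_def FSig_simps FSig_Ob Jdg.R1)
qed

lemma FSig_tysub_Ty: "A \<in> Ty F \<Gamma> \<Longrightarrow> f \<in> Hom F \<Delta> \<Gamma> \<Longrightarrow> tysub F A f \<in> Ty F \<Delta>"
  by (auto simp: FSig_Ty FSig_Hom FSig_simps intro: Jdg_subst_ty)

lemma FSig_tysub_idm: "A \<in> Ty F \<Gamma> \<Longrightarrow> tysub F A (idm F \<Gamma>) = A"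
  by (auto simp: FSig_Ty FSig_simps)

lemma FSig_tysub_cmp:
  assumes "A \<in> Ty F \<Gamma>" "f \<in> Hom F \<Delta> \<Gamma>" "g \<in> Hom F \<Theta> \<Delta>"
  shows "tysub F A (cmp F f g) = tysub F (tysub F A f) g"
proof -
  obtain S fs gs where A: "A = (\<Gamma>, S)" "JTy \<Gamma> S \<in> J" and f: "f = (\<Delta>, \<Gamma>, fs)" "cmapJ J \<Delta> \<Gamma> fs"
    and g: "g = (\<Theta>, \<Delta>, gs)"
    using assms by (auto simp: FSig_Ty FSig_Hom)
  show ?thesis
    using substT_substL[OF Jdg_ty_scoped[OF presig A(2)], of fs] f(2) A f g
    by (simp add: FSig_simps cmapJ_def)
qed

lemma FSig_ext_Ob:
  assumes "\<Gamma> \<in> Ob F" "A \<in> Ty F \<Gamma>"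
  shows "ext F \<Gamma> A \<in> Ob F \<and> pp F \<Gamma> A \<in> Hom F (ext F \<Gamma> A) \<Gamma>"
proof -
  obtain S where A: "A = (\<Gamma>, S)" "JTy \<Gamma> S \<in> J" using assms(2) by (auto simp: FSig_Ty)
  have \<Gamma>: "JCtx \<Gamma> \<in> J" using assms(1) by (simp add: FSig_Ob)
  show ?thesis
    using Jdg_ext[OF \<Gamma> A(2)] cmapJ_weaken[OF Jdg_ext[OF \<Gamma> A(2)] \<Gamma>] A
    by (simp add: FSig_Ob FSig_Hom FSig_simps)
qed

lemma FSig_tmsub_Tm:
  assumes "A \<in> Ty F \<Gamma>" "a \<in> Tm F \<Gamma> A" "f \<in> Hom F \<Delta> \<Gamma>"
  shows "tmsub F a f \<in> Tm F \<Delta> (tysub F A f)"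
proof -
  obtain S fs b where A: "A = (\<Gamma>, S)" and f: "f = (\<Delta>, \<Gamma>, fs)" "cmapJ J \<Delta> \<Gamma> fs"
    and a: "a = ((\<Gamma>, S), b)" "JTm \<Gamma> b S \<in> J"
    using assms by (auto simp: FSig_Ty FSig_Hom FSig_Tm)
  show ?thesis using Jdg_subst_tm[OF a(2) f(2)] A f a by (simp add: FSig_simps FSig_Tm)
qed

lemma FSig_tmsub_idm: "A \<in> Ty F \<Gamma> \<Longrightarrow> a \<in> Tm F \<Gamma> A \<Longrightarrow> tmsub F a (idm F \<Gamma>) = a"
  by (auto simp: FSig_Ty FSig_Tm FSig_simps)

lemma FSig_tmsub_cmp:
  assumes "A \<in> Ty F \<Gamma>" "a \<in> Tm F \<Gamma> A" "f \<in> Hom F \<Delta> \<Gamma>" "g \<in> Hom F \<Theta> \<Delta>"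
  shows "tmsub F a (cmp F f g) = tmsub F (tmsub F a f) g"
proof -
  obtain S fs gs b where A: "A = (\<Gamma>, S)" and f: "f = (\<Delta>, \<Gamma>, fs)" "cmapJ J \<Delta> \<Gamma> fs"
    and g: "g = (\<Theta>, \<Delta>, gs)" and a: "a = ((\<Gamma>, S), b)" "JTm \<Gamma> b S \<in> J"
    using assms by (auto simp: FSig_Ty FSig_Hom FSig_Tm)
  have len: "length (OV \<Gamma>) = length fs" using f(2) by (simp add: cmapJ_def)
  have "varsT S \<subseteq> set (OV \<Gamma>)" "varsE b \<subseteq> set (OV \<Gamma>)" using Jdg_tm_scoped[OF presig a(2)] by auto
  from substT_substL[OF this(1) len] substE_substL[OF this(2) len] show ?thesis
    using A a f g by (simp add: FSig_simps)
qed

lemma FSig_vv_Tm: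
  assumes "\<Gamma> \<in> Ob F" "A \<in> Ty F \<Gamma>"
  shows "vv F \<Gamma> A \<in> Tm F (ext F \<Gamma> A) (tysub F A (pp F \<Gamma> A))"
proof -
  obtain S where A: "A = (\<Gamma>, S)" "JTy \<Gamma> S \<in> J" using assms(2) by (auto simp: FSig_Ty)
  have \<Gamma>: "JCtx \<Gamma> \<in> J" using assms(1) by (simp add: FSig_Ob)
  show ?thesis
    using Jdg.R3[OF Jdg_ext[OF \<Gamma> A(2)], of "length \<Gamma>"] A by (simp add: FSig_Tm FSig_simps)
qed

lemma substL_ext_fresh:
  assumes "JCtx \<Gamma> \<in> J" "length ss = length \<Gamma>"
  shows "substL (OV \<Gamma> @ [freshC fr \<Gamma>]) (ss @ [b]) = (substL (OV \<Gamma>) ss)(freshC fr \<Gamma> := b)"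
    and "map (substL (OV \<Gamma> @ [freshC fr \<Gamma>]) (ss @ [b])) (OV \<Gamma>) = ss"
proof -
  have len: "length (OV \<Gamma>) = length ss" using assms(2) by simp
  show eq: "substL (OV \<Gamma> @ [freshC fr \<Gamma>]) (ss @ [b]) = (substL (OV \<Gamma>) ss)(freshC fr \<Gamma> := b)"
    using substL_snoc[OF len freshC_notin] .
  have "map (substL (OV \<Gamma>) ss) (OV \<Gamma>) = ss"
    using map_substL_self[OF distinct_OV[OF fresh Jdg_ctx_precontext[OF presig assms(1)]] len] .
  then show "map (substL (OV \<Gamma> @ [freshC fr \<Gamma>]) (ss @ [b])) (OV \<Gamma>) = ss"
    unfolding eq using freshC_notin by (metis (no_types, lifting) fun_upd_other map_eq_conv)
qed

lemma FSig_pair: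
  assumes "\<Gamma> \<in> Ob F" "A \<in> Ty F \<Gamma>" "f \<in> Hom F \<Delta> \<Gamma>" "a \<in> Tm F \<Delta> (tysub F A f)"
  shows "pair F \<Gamma> A f a \<in> Hom F \<Delta> (ext F \<Gamma> A)
    \<and> cmp F (pp F \<Gamma> A) (pair F \<Gamma> A f a) = f
    \<and> tmsub F (vv F \<Gamma> A) (pair F \<Gamma> A f a) = a
    \<and> (\<forall>\<Theta> g. g \<in> Hom F \<Theta> \<Delta> \<longrightarrow> cmp F (pair F \<Gamma> A f a) g = pair F \<Gamma> A (cmp F f g) (tmsub F a g))"
proof -
  obtain S ss where A: "A = (\<Gamma>, S)" "JTy \<Gamma> S \<in> J" and f: "f = (\<Delta>, \<Gamma>, ss)" "cmapJ J \<Delta> \<Gamma> ss"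
    using assms(2,3) by (auto simp: FSig_Ty FSig_Hom)
  obtain b where a: "a = ((\<Delta>, substT (substL (OV \<Gamma>) ss) S), b)"
      "JTm \<Delta> b (substT (substL (OV \<Gamma>) ss) S) \<in> J"
    using assms(4) A f by (auto simp: FSig_Tm FSig_simps)
  have \<Gamma>: "JCtx \<Gamma> \<in> J" using assms(1) by (simp add: FSig_Ob)
  have "cmapJ J \<Delta> (\<Gamma> @ [(freshC fr \<Gamma>, S)]) (ss @ [b])"
    using cmapJ_snoc[OF f(2) Jdg_ext[OF \<Gamma> A(2)] a(2)] .
  moreover have "substT ((substL (OV \<Gamma>) ss)(freshC fr \<Gamma> := b)) S = substT (substL (OV \<Gamma>) ss) S"
    using Jdg_ty_scoped[OF presig A(2)] freshC_notin by (intro substT_cong) auto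
  moreover have "length ss = length \<Gamma>" using f(2) by (simp add: cmapJ_def)
  note ext_fresh = substL_ext_fresh[OF \<Gamma> this, of b]
  ultimately show ?thesis
    using A f a ext_fresh(2)
    by (simp add: FSig_Hom FSig_simps comp_def ext_fresh(1) fun_upd_same del: fun_upd_apply)
qed

lemma FSig_pair_eta:
  assumes "\<Gamma> \<in> Ob F" "A \<in> Ty F \<Gamma>" "h \<in> Hom F \<Delta> (ext F \<Gamma> A)"
  shows "pair F \<Gamma> A (cmp F (pp F \<Gamma> A) h) (tmsub F (vv F \<Gamma> A) h) = h"
proof -
  obtain S where A: "A = (\<Gamma>, S)" using assms(2) by (auto simp: FSig_Ty)
  obtain hs where h: "h = (\<Delta>, \<Gamma> @ [(freshC fr \<Gamma>, S)], hs)" "cmapJ J \<Delta> (\<Gamma> @ [(freshC fr \<Gamma>, S)]) hs"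
    using assms(3) A by (auto simp: FSig_Hom FSig_simps)
  have "hs \<noteq> []" using h(2) by (auto simp: cmapJ_def)
  then obtain ss b where hs: "hs = ss @ [b]" by (metis append_butlast_last_id)
  have "length ss = length \<Gamma>" using h(2) hs by (simp add: cmapJ_def)
  moreover have "JCtx \<Gamma> \<in> J" using assms(1) by (simp add: FSig_Ob)
  ultimately have "map (substL (OV \<Gamma> @ [freshC fr \<Gamma>]) (ss @ [b])) (OV \<Gamma>) = ss"
    and "substL (OV \<Gamma> @ [freshC fr \<Gamma>]) (ss @ [b]) (freshC fr \<Gamma>) = b"
    using substL_ext_fresh[of \<Gamma> ss b] by simp_all
  then show ?thesis using A h hs by (simp add: FSig_simps comp_def)
qed

lemma FSig_is_cwf: "is_cwf F"
  unfolding is_cwf_def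
  by (simp add: FSig_category FSig_terminal FSig_tysub_Ty FSig_tysub_idm FSig_tysub_cmp FSig_ext_Ob
    FSig_tmsub_Tm FSig_tmsub_idm FSig_tmsub_cmp FSig_vv_Tm FSig_pair FSig_pair_eta)

end

section \<open>Contextuality under the de Bruijn property\<close>

lemma ext_iter_snoc: "ext_iter C (As @ [A]) = ext C (ext_iter C As) A"
  by (simp add: ext_iter_def)

lemma is_tower_snoc: "is_tower C (As @ [A]) \<longleftrightarrow> is_tower C As \<and> A \<in> Ty C (ext_iter C As)"
  unfolding is_tower_def by (auto simp: nth_append less_Suc_eq)

definition canon_tower :: "('v, 'f, 't) pctx \<Rightarrow> ('v, 'f, 't) Fty list" where
  "canon_tower \<Gamma> = map (\<lambda>k. (take k \<Gamma>, snd (\<Gamma> ! k))) [0..<length \<Gamma>]"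

lemma canon_tower_snoc: "canon_tower (\<Gamma> @ [(x, S)]) = canon_tower \<Gamma> @ [(\<Gamma>, S)]"
  unfolding canon_tower_def by (auto simp: nth_append)

text \<open>In \<open>F\<^sub>\<Sigma>\<close> a type records its context, so a tower is determined by the context it builds.\<close>

lemma tower_eq_canon: "is_tower (FSig \<phi> fr \<Sigma>) As \<Longrightarrow> As = canon_tower (ext_iter (FSig \<phi> fr \<Sigma>) As)"
proof (induction As rule: rev_induct)
  case Nil
  then show ?case by (simp add: canon_tower_def ext_iter_def FSig_simps)
next
  case (snoc A As)
  then have "is_tower (FSig \<phi> fr \<Sigma>) As" and A: "A \<in> Ty (FSig \<phi> fr \<Sigma>) (ext_iter (FSig \<phi> fr \<Sigma>) As)"
    by (auto simp: is_tower_snoc)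
  with snoc.IH show ?case using A by (auto simp: ext_iter_snoc FSig_Ty FSig_simps canon_tower_snoc)
qed

context syntactic_cwf
begin

lemma tower_exists:
  assumes "de_Bruijn \<phi> fr" "JCtx \<Gamma> \<in> J"
  shows "\<exists>As. is_tower F As \<and> ext_iter F As = \<Gamma>"
  using assms(2)
proof (induction \<Gamma> rule: rev_induct)
  case Nil
  then show ?case by (intro exI[of _ "[]"]) (simp add: is_tower_def ext_iter_def FSig_simps)
next
  case (snoc xA \<Gamma>)
  obtain x S where xA: "xA = (x, S)" by (cases xA)
  have inv: "JCtx \<Gamma> \<in> J" "JTy \<Gamma> S \<in> J" "x \<in> \<phi> (VC \<Gamma>)"
    using Jdg_snoc_ctx_inv[of \<Gamma> x S] snoc.prems xA by simp_all
  have "\<phi> (VC \<Gamma>) = {fr (VC \<Gamma>)}"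
    using assms(1) finite_VC unfolding de_Bruijn_def by blast
  then have x: "x = freshC fr \<Gamma>" using inv(3) by (simp add: freshC_def)
  obtain As where As: "is_tower F As" "ext_iter F As = \<Gamma>" using snoc.IH[OF inv(1)] by blast
  show ?case
  proof (intro exI[of _ "As @ [(\<Gamma>, S)]"] conjI)
    show "is_tower F (As @ [(\<Gamma>, S)])" using As inv(2) by (simp add: is_tower_snoc FSig_Ty)
    show "ext_iter F (As @ [(\<Gamma>, S)]) = \<Gamma> @ [xA]" using As xA x by (simp add: ext_iter_snoc FSig_simps)
  qed
qed

lemma FSig_contextual:
  assumes "de_Bruijn \<phi> fr"
  shows "is_contextual_cwf F"
  unfolding is_contextual_cwf_def
proof (intro conjI ballI FSig_is_cwf)
  fix \<Gamma> assume "\<Gamma> \<in> Ob F"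
  then obtain As where As: "is_tower F As" "ext_iter F As = \<Gamma>"
    using tower_exists[OF assms] by (auto simp: FSig_Ob)
  show "\<exists>!As. is_tower F As \<and> ext_iter F As = \<Gamma>"
    using As by (metis tower_eq_canon)
qed

end

theorem mainTheorem12:
  fixes \<phi> :: "'v set \<Rightarrow> 'v set" and fr :: "'v set \<Rightarrow> 'v"
    and \<Sigma> :: "('v, 'f, 't) predecl set"
  assumes "fresh_provider \<phi> fr"
    and "signature \<phi> \<Sigma>"
  shows "is_cwf (FSig \<phi> fr \<Sigma>)
         \<and> (de_Bruijn \<phi> fr \<longrightarrow> is_contextual_cwf (FSig \<phi> fr \<Sigma>))"
proof -
  have "presignature \<phi> \<Sigma>" using assms(2) by (simp add: signature_def)
  then interpret syntactic_cwf \<phi> fr \<Sigma> using assms(1) by unfold_locales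
  show ?thesis using FSig_is_cwf FSig_contextual by blast
qed

end
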